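(* Let $L=(\phi,f,\eta):\mathbb{TD}_n\to\mathbb{TB}^{F_2}_{\mathbb{R},n}$ be the crossed intertwiner with $\phi(a\oplus\hat a)=a$, $f(m\oplus\hat m,s)=(\tau_{s,\hat m},m)$ where $\tau_{s,\hat m}(c)=s+\hat mc$, and $\eta(a\oplus\hat a,a'\oplus\hat a')=\hat aa'$ (a constant function). For every $B\in\mathfrak{so}(n,\mathbb{Z})$ let $F_B=(\mathrm{id}_{\mathbb{R}^n},f_B,\eta_B)$ act on $\mathbb{TB}^{F_2}_{\mathbb{R},n}$ with $f_B(\tau,m)=(\tau-\langle m|B|,m)$ and $\eta_B(a,a')=\langle a'|B|a\rangle_{low}$ (constant function), and let $F_{e^B}=(\phi_{e^B},f_{e^B},\eta_{e^B})$ act on $\mathbb{TD}_n$ with $\phi_{e^B}(a\oplus\hat a)=a\oplus(Ba+\hat a)$, $f_{e^B}(m\oplus\hat m,s)=(m\oplus(Bm+\hat m),s)$ and $\eta_{e^B}(a\oplus\hat a,b\oplus\hat b)=\langle a|B|b\rangle_{low}$. Then $L$ is strictly $\mathfrak{so}(n,\mathbb{Z})$-equivariant: $F_B\circ L=L\circ F_{e^B}$ for all $B\in\mathfrak{so}(n,\mathbb{Z})$, with composition of crossed intertwiners as defined below.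
   Context: $U(1)=\mathbb{R}/\mathbb{Z}$, $\mathbb{T}^n=\mathbb{R}^n/\mathbb{Z}^n$ additively; $vw=\sum v_iw_i$. For $B\in\mathfrak{so}(n,\mathbb{Z})$ (skew-symmetric integer matrices), $\langle v|B|w\rangle=\sum B_{ij}v_iw_j$, $B_{low}$ the strictly lower triangular matrix with $B=B_{low}-B_{low}^T$, $\langle v|B|w\rangle_{low}=\langle v|B_{low}|w\rangle$, and $\langle m|B|$ for $m\in\mathbb{Z}^n$ is the function $c\mapsto\langle m|B|c\rangle$ on $\mathbb{T}^n$. For $\tau\in C^\infty(\mathbb{T}^n,U(1))$, $a.\tau(c)=\tau(c-a)$. A crossed module $(G,H,t,\alpha)$: Lie groups $G,H$, homomorphism $t:H\to G$, smooth action $\alpha$ of $G$ on $H$ by automorphisms with $\alpha(t(h),h')=hh'h^{-1}$, $t(\alpha(g,h))=gt(h)g^{-1}$; $U:=\ker t$. A crossed intertwiner $(\phi,f,\eta):(G,H,t,\alpha)\to(G',H',t',\alpha')$ consists of homomorphisms $\phi:G\to G'$, $f:H\to H'$ and a smooth map $\eta:G\times G\to U'$ with (CI1) $\phi(t(h))=t'(f(h))$; (CI2) $\eta(t(h),t(h'))=1$; (CI3) $\eta(g,t(h)g^{-1})f(\alpha(g,h))=\alpha'(\phi(g),\eta(t(h)g^{-1},g))\,\alpha'(\phi(g),f(h))$; (CI4) $\eta(g,g')\eta(gg',g'')=\alpha'(\phi(g),\eta(g',g''))\eta(g,g'g'')$. Composition: $(\phi_2,f_2,\eta_2)\circ(\phi_1,f_1,\eta_1)=(\phi_2\circ\phi_1,f_2\circ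 f_1,(\eta_2\circ(\phi_1\times\phi_1))\cdot(f_2\circ\eta_1))$. $\mathbb{TD}_n$: $G=\mathbb{R}^{2n}=\mathbb{R}^n\oplus\mathbb{R}^n$ (elements $a\oplus\hat a$), $H=(\mathbb{Z}^n\oplus\mathbb{Z}^n)\times U(1)$ (elements $(m\oplus\hat m,s)$), $t(m\oplus\hat m,s)=m\oplus\hat m$, $\alpha(a\oplus\hat a,(m\oplus\hat m,s))=(m\oplus\hat m,s-\hat am)$. $\mathbb{TB}^{F_2}_{\mathbb{R},n}$: $G=\mathbb{R}^n$, $H=C^\infty(\mathbb{T}^n,U(1))\times\mathbb{Z}^n$ (pointwise group structure on the first factor), $t(\tau,m)=m$, $\alpha(a,(\tau,m))=(a.\tau,m)$. *)

theory Defs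
  imports "HOL-Analysis.Analysis"
begin

definition u1_rel :: "real \<Rightarrow> real \<Rightarrow> bool" where
  "u1_rel x y \<longleftrightarrow> x - y \<in> \<int>"

lemma equivp_u1_rel: "equivp u1_rel"
proof (rule equivpI)
  show "reflp u1_rel" by (simp add: reflp_def u1_rel_def)
  show "symp u1_rel" unfolding symp_def u1_rel_def
    by (metis Ints_minus minus_diff_eq)
  show "transp u1_rel" unfolding transp_def u1_rel_def
    by (metis Ints_add diff_add_cancel add_diff_eq diff_diff_eq2)
qed

quotient_type u1 = real / u1_rel
  by (rule equivp_u1_rel)

instantiation u1 :: ab_group_add
begin
lift_definition zero_u1 :: u1 is "0::real" .
lift_definition plus_u1 :: "u1 \<Rightarrow> u1 \<Rightarrow> u1" is "(+)"
  unfolding u1_rel_def by (metis Ints_add add_diff_add)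
lift_definition uminus_u1 :: "u1 \<Rightarrow> u1" is "uminus"
  unfolding u1_rel_def by (metis Ints_minus minus_diff_eq minus_diff_minus)
lift_definition minus_u1 :: "u1 \<Rightarrow> u1 \<Rightarrow> u1" is "(-)"
  unfolding u1_rel_def by (metis Ints_diff diff_diff_eq diff_add_eq add_diff_eq diff_diff_eq2
      diff_add_cancel add.commute diff_diff_add)
instance
  by standard (transfer; simp add: u1_rel_def)+
end

lift_definition u1 :: "real \<Rightarrow> u1" is "\<lambda>x. x" .

definition torus_rel :: "real^'n \<Rightarrow> real^'n \<Rightarrow> bool" where
  "torus_rel x y \<longleftrightarrow> (\<forall>i. x $ i - y $ i \<in> \<int>)"

lemma equivp_torus_rel: "equivp torus_rel"
proof (rule equivpI)
  show "reflp torus_rel" by (simp add: reflp_def torus_rel_def)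
  show "symp torus_rel" unfolding symp_def torus_rel_def
    by (metis Ints_minus minus_diff_eq)
  show "transp torus_rel" unfolding transp_def torus_rel_def
    by (metis Ints_add diff_add_cancel add_diff_eq diff_diff_eq2)
qed

quotient_type 'n torus = "real^'n" / torus_rel
  by (rule equivp_torus_rel)

lift_definition tpair :: "int^'n \<Rightarrow> 'n torus \<Rightarrow> u1"
  is "\<lambda>m c. (\<Sum>i\<in>UNIV. of_int (m $ i) * c $ i)"
proof -
  fix m :: "int^'n" and c d :: "real^'n"
  assume "torus_rel c d"
  then have h: "\<And>i. c $ i - d $ i \<in> \<int>" by (simp add: torus_rel_def)
  have "(\<Sum>i\<in>UNIV. of_int (m $ i) * c $ i) - (\<Sum>i\<in>UNIV. of_int (m $ i) * d $ i)
        = (\<Sum>i\<in>UNIV. of_int (m $ i) * (c $ i - d $ i))"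
    by (simp add: sum_subtractf right_diff_distrib)
  also have "\<dots> \<in> \<int>" using h by (intro Ints_sum Ints_mult) auto
  finally show "u1_rel (\<Sum>i\<in>UNIV. of_int (m $ i) * c $ i) (\<Sum>i\<in>UNIV. of_int (m $ i) * d $ i)"
    by (simp add: u1_rel_def)
qed

lift_definition torus_shift :: "real^'n \<Rightarrow> 'n torus \<Rightarrow> 'n torus" is "\<lambda>a c. c - a"
  unfolding torus_rel_def by (simp add: algebra_simps)

definition act :: "real^'n \<Rightarrow> ('n torus \<Rightarrow> u1) \<Rightarrow> ('n torus \<Rightarrow> u1)" where
  "act a \<tau> = (\<lambda>c. \<tau> (torus_shift a c))"

definition so_Z :: "(int^'n^'n) set" where
  "so_Z = {B. \<forall>i j. B $ i $ j = - (B $ j $ i)}"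

definition bra_ket :: "real^'n \<Rightarrow> int^'n^'n \<Rightarrow> real^'n \<Rightarrow> real" where
  "bra_ket v B w = (\<Sum>i\<in>UNIV. \<Sum>j\<in>UNIV. of_int (B $ i $ j) * v $ i * w $ j)"

definition Blow :: "((int, 'n::{finite,linorder}) vec, 'n) vec \<Rightarrow> ((int, 'n) vec, 'n) vec" where
  "Blow B = (\<chi> i j. if j < i then B $ i $ j else 0)"

definition bra_ket_low :: "(real, 'n::{finite,linorder}) vec \<Rightarrow> ((int, 'n) vec, 'n) vec \<Rightarrow> (real, 'n) vec \<Rightarrow> real" where
  "bra_ket_low v B w = bra_ket v (Blow B) w"

definition bra_B :: "int^'n \<Rightarrow> int^'n^'n \<Rightarrow> 'n torus \<Rightarrow> u1" where
  "bra_B m B = (\<lambda>c. tpair (\<chi> j. \<Sum>i\<in>UNIV. B $ i $ j * m $ i) c)"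

definition matvec_real :: "int^'n^'n \<Rightarrow> real^'n \<Rightarrow> real^'n" where
  "matvec_real B a = (\<chi> i. \<Sum>j\<in>UNIV. of_int (B $ i $ j) * a $ j)"

definition matvec_int :: "int^'n^'n \<Rightarrow> int^'n \<Rightarrow> int^'n" where
  "matvec_int B m = (\<chi> i. \<Sum>j\<in>UNIV. B $ i $ j * m $ j)"

type_synonym 'n gTD = "(real^'n) \<times> (real^'n)"
type_synonym 'n hTD = "((int^'n) \<times> (int^'n)) \<times> u1"
type_synonym 'n gTB = "real^'n"
type_synonym 'n hTB = "('n torus \<Rightarrow> u1) \<times> (int^'n)"

definition hTD_mult :: "('n::finite) hTD \<Rightarrow> 'n hTD \<Rightarrow> 'n hTD" where
  "hTD_mult x y = ((fst (fst x) + fst (fst y), snd (fst x) + snd (fst y)), snd x + snd y)"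

definition hTB_mult :: "('n::finite) hTB \<Rightarrow> 'n hTB \<Rightarrow> 'n hTB" where
  "hTB_mult x y = ((\<lambda>c. fst x c + fst y c), snd x + snd y)"

text \<open>A crossed intertwiner is a triple (\<phi>, f, \<eta>); \<eta> takes values in U' = ker t' \<subseteq> H'.\<close>
definition ci_comp ::
  "('h3 \<Rightarrow> 'h3 \<Rightarrow> 'h3) \<Rightarrow>
   ('g2 \<Rightarrow> 'g3) \<times> ('h2 \<Rightarrow> 'h3) \<times> ('g2 \<Rightarrow> 'g2 \<Rightarrow> 'h3) \<Rightarrow>
   ('g1 \<Rightarrow> 'g2) \<times> ('h1 \<Rightarrow> 'h2) \<times> ('g1 \<Rightarrow> 'g1 \<Rightarrow> 'h2) \<Rightarrow>
   ('g1 \<Rightarrow> 'g3) \<times> ('h1 \<Rightarrow> 'h3) \<times> ('g1 \<Rightarrow> 'g1 \<Rightarrow> 'h3)" where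
  "ci_comp hmult F2 F1 =
     (case F2 of (\<phi>2, f2, \<eta>2) \<Rightarrow> case F1 of (\<phi>1, f1, \<eta>1) \<Rightarrow>
       (\<phi>2 \<circ> \<phi>1, f2 \<circ> f1, \<lambda>g g'. hmult (\<eta>2 (\<phi>1 g) (\<phi>1 g')) (f2 (\<eta>1 g g'))))"

definition L_phi :: "('n::finite) gTD \<Rightarrow> 'n gTB" where
  "L_phi g = fst g"

definition L_f :: "('n::finite) hTD \<Rightarrow> 'n hTB" where
  "L_f h = ((\<lambda>c. snd h + tpair (snd (fst h)) c), fst (fst h))"

text \<open>\<eta>(a \<oplus> a^, a' \<oplus> a^') = a^ a' (constant function), as an element of ker t = C^\<infinity>(T^n,U(1)) \<times> {0}.\<close>
definition L_eta :: "('n::finite) gTD \<Rightarrow> 'n gTD \<Rightarrow> 'n hTB" where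
  "L_eta g g' = ((\<lambda>c. u1 (snd g \<bullet> fst g')), 0)"

definition L_ci where "L_ci = (L_phi, L_f, L_eta)"

definition FB_f :: "((int, 'n::finite) vec, 'n) vec \<Rightarrow> 'n hTB \<Rightarrow> 'n hTB" where
  "FB_f B h = ((\<lambda>c. fst h c - bra_B (snd h) B c), snd h)"

definition FB_eta :: "((int, 'n::{finite,linorder}) vec, 'n) vec \<Rightarrow> 'n gTB \<Rightarrow> 'n gTB \<Rightarrow> 'n hTB" where
  "FB_eta B a a' = ((\<lambda>c. u1 (bra_ket_low a' B a)), 0)"

definition FB_ci where "FB_ci B = (id, FB_f B, FB_eta B)"

definition FeB_phi :: "((int, 'n::finite) vec, 'n) vec \<Rightarrow> 'n gTD \<Rightarrow> 'n gTD" where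
  "FeB_phi B g = (fst g, matvec_real B (fst g) + snd g)"

definition FeB_f :: "((int, 'n::finite) vec, 'n) vec \<Rightarrow> 'n hTD \<Rightarrow> 'n hTD" where
  "FeB_f B h = ((fst (fst h), matvec_int B (fst (fst h)) + snd (fst h)), snd h)"

definition FeB_eta :: "((int, 'n::{finite,linorder}) vec, 'n) vec \<Rightarrow> 'n gTD \<Rightarrow> 'n gTD \<Rightarrow> 'n hTD" where
  "FeB_eta B g g' = ((0, 0), u1 (bra_ket_low (fst g) B (fst g')))"

definition FeB_ci where "FeB_ci B = (FeB_phi B, FeB_f B, FeB_eta B)"

end

theory Submission
  imports Defs
begin

text \<open>Strict equivariance is checked component by component. On G both sides are
  \<open>a \<oplus> \<hat>a \<mapsto> a\<close>. On H it amounts to \<open><m|B| = -(Bm)c\<close>, i.e. skew-symmetry of B.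
  On the cocycles it amounts to \<open>(Ba)a' = <a'|B|a>_low - <a|B|a'>_low\<close>: the left side
  is \<open><a'|B|a>\<close>, so this is \<open>B = B_low - B_low^T\<close> read as an identity of bilinear forms.\<close>

lemma u1_add: "u1 x + u1 y = u1 (x + y)"
  by transfer (simp add: u1_rel_def)

lemma tpair_add: "tpair (m + m') c = tpair m c + tpair m' c"
  by transfer (simp add: u1_rel_def distrib_right sum.distrib)

lemma tpair_uminus: "tpair (- m) c = - tpair m c"
  by transfer (simp add: u1_rel_def sum_negf)

lemma tpair_zero [simp]: "tpair 0 c = 0"
  by transfer (simp add: u1_rel_def)

lemma so_Z_antisym: "B \<in> so_Z \<Longrightarrow> B $ i $ j = - (B $ j $ i)"
  unfolding so_Z_def by blast

lemma so_Z_eq_Blow_diff: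
  assumes "B \<in> so_Z"
  shows "B $ i $ j = Blow B $ i $ j - Blow B $ j $ i"
  using so_Z_antisym[OF assms, of i j] so_Z_antisym[OF assms, of i i]
  by (cases i j rule: linorder_cases) (simp_all add: Blow_def)

lemma bra_ket_so_Z:
  assumes "B \<in> so_Z"
  shows "bra_ket v B w = bra_ket_low v B w - bra_ket_low w B v"
proof -
  have "bra_ket v B w = (\<Sum>i\<in>UNIV. \<Sum>j\<in>UNIV. of_int (Blow B $ i $ j) * v $ i * w $ j)
      - (\<Sum>i\<in>UNIV. \<Sum>j\<in>UNIV. of_int (Blow B $ j $ i) * v $ i * w $ j)"
    unfolding bra_ket_def
    by (simp only: so_Z_eq_Blow_diff[OF assms] of_int_diff left_diff_distrib sum_subtractf)
  also have "(\<Sum>i\<in>UNIV. \<Sum>j\<in>UNIV. of_int (Blow B $ j $ i) * v $ i * w $ j) = bra_ket_low w B v"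
    unfolding bra_ket_low_def bra_ket_def by (subst sum.swap) (simp add: mult_ac)
  finally show ?thesis
    by (simp add: bra_ket_low_def bra_ket_def)
qed

lemma inner_matvec_real: "matvec_real B w \<bullet> v = bra_ket v B w"
  by (simp add: matvec_real_def bra_ket_def inner_vec_def sum_distrib_left
      sum_distrib_right mult_ac)

lemma bra_B_so_Z:
  assumes "B \<in> so_Z"
  shows "bra_B m B c = - tpair (matvec_int B m) c"
proof -
  have "(\<Sum>i\<in>UNIV. B $ i $ j * m $ i) = - matvec_int B m $ j" for j
    by (simp add: matvec_int_def so_Z_antisym[OF assms, of _ j] sum_negf)
  then have "(\<chi> j. \<Sum>i\<in>UNIV. B $ i $ j * m $ i) = - matvec_int B m"
    by (simp add: vec_eq_iff)
  then show ?thesis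
    by (simp add: bra_B_def tpair_uminus)
qed

lemma L_phi_FeB_phi: "L_phi (FeB_phi B g) = L_phi g"
  by (simp add: L_phi_def FeB_phi_def)

lemma FB_f_L_f:
  assumes "B \<in> so_Z"
  shows "FB_f B (L_f h) = L_f (FeB_f B h)"
  by (simp add: FB_f_def L_f_def FeB_f_def bra_B_so_Z[OF assms] tpair_add add_ac)

lemma FB_eta_L_eta:
  assumes "B \<in> so_Z"
  shows "hTB_mult (FB_eta B (L_phi g) (L_phi g')) (FB_f B (L_eta g g'))
       = hTB_mult (L_eta (FeB_phi B g) (FeB_phi B g')) (L_f (FeB_eta B g g'))"
proof -
  obtain a ah b bh where g: "g = (a, ah)" and g': "g' = (b, bh)"
    by fastforce
  have "bra_ket_low b B a + ah \<bullet> b = (matvec_real B a + ah) \<bullet> b + bra_ket_low a B b"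
    using bra_ket_so_Z[OF assms, of b a] by (simp add: inner_add_left inner_matvec_real)
  then show ?thesis
    unfolding g g' hTB_mult_def FB_eta_def FB_f_def L_eta_def L_f_def FeB_eta_def
      FeB_phi_def L_phi_def
    by (simp add: bra_B_def u1_add flip: zero_vec_def)
qed

theorem mainTheorem8:
  fixes B :: "((int, 'n::{finite,linorder}) vec, 'n) vec"
  assumes "B \<in> so_Z"
  shows "ci_comp hTB_mult (FB_ci B) L_ci = ci_comp hTB_mult L_ci (FeB_ci B)"
  unfolding ci_comp_def FB_ci_def L_ci_def FeB_ci_def
  by (simp add: fun_eq_iff L_phi_FeB_phi FB_f_L_f[OF assms] FB_eta_L_eta[OF assms])

end
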